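(* Let $a\in[0,1/2]$, $p\in[1,2)$ and $\mu\ge-a^2$. Let \[ \lambda_{a,p}(\mu)=\inf\Big\{\|\psi'-i\,a\,\psi\|_{\mathrm L^2(\mathbb S^1)}^2+\mu\,\|\psi\|_{\mathrm L^p(\mathbb S^1)}^2\,:\,\psi\in\mathrm H^1(\mathbb S^1,\mathbb C),\ \|\psi\|_{\mathrm L^2(\mathbb S^1)}=1\Big\}. \] Then this infimum is achieved by at least one function $\psi\in\mathrm H^1(\mathbb S^1,\mathbb C)$ with $\|\psi\|_{\mathrm L^2(\mathbb S^1)}=1$, i.e. equality holds for some nonzero function in the inequality $\|\psi'-ia\psi\|_2^2+\mu\|\psi\|_p^2\ge\lambda_{a,p}(\mu)\|\psi\|_2^2$.
   Context: $\mathbb S^1\approx[-\pi,\pi)$ with uniform probability measure $d\theta/(2\pi)$; norms on $\mathbb S^1$ are with respect to it. $\mathrm H^1(\mathbb S^1,\mathbb C)$ is the space of $2\pi$-periodic complex-valued functions with derivative in $\mathrm L^2$. *)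

theory Defs
  imports "HOL-Analysis.Analysis"
begin

text \<open>The circle S^1 is identified with [-pi,pi), functions on it with 2pi-periodic
functions real => complex. Norms are with respect to the uniform probability
measure d theta/(2 pi).\<close>

definition H1_with_deriv :: "(real \<Rightarrow> complex) \<Rightarrow> (real \<Rightarrow> complex) \<Rightarrow> bool" where
  "H1_with_deriv \<psi> g \<longleftrightarrow>
     (\<forall>x. \<psi> (x + 2 * pi) = \<psi> x) \<and>
     set_borel_measurable lborel {-pi..pi} g \<and>
     set_integrable lborel {-pi..pi} (\<lambda>x. (cmod (g x))\<^sup>2) \<and>
     (\<forall>x\<in>{-pi..pi}. \<psi> x = \<psi> (-pi) + (LINT t:{-pi..x}|lborel. g t))"

definition circ_mean_pow :: "real \<Rightarrow> (real \<Rightarrow> complex) \<Rightarrow> real" where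
  "circ_mean_pow p f = (LINT x:{-pi..pi}|lborel. (cmod (f x)) powr p) / (2 * pi)"

definition Lp_norm_sq :: "real \<Rightarrow> (real \<Rightarrow> complex) \<Rightarrow> real" where
  "Lp_norm_sq p f = (circ_mean_pow p f) powr (2 / p)"

definition energy :: "real \<Rightarrow> real \<Rightarrow> real \<Rightarrow> (real \<Rightarrow> complex) \<Rightarrow> (real \<Rightarrow> complex) \<Rightarrow> real" where
  "energy a p \<mu> \<psi> g =
     (LINT x:{-pi..pi}|lborel. (cmod (g x - \<i> * complex_of_real a * \<psi> x))\<^sup>2) / (2 * pi)
     + \<mu> * Lp_norm_sq p \<psi>"

definition admissible :: "(real \<Rightarrow> complex) \<Rightarrow> (real \<Rightarrow> complex) \<Rightarrow> bool" where
  "admissible \<psi> g \<longleftrightarrow> H1_with_deriv \<psi> g \<and> circ_mean_pow 2 \<psi> = 1"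

definition lambda_ap :: "real \<Rightarrow> real \<Rightarrow> real \<Rightarrow> real" where
  "lambda_ap a p \<mu> = Inf {energy a p \<mu> \<psi> g | \<psi> g. admissible \<psi> g}"

end

theory Submission
  imports Defs "HOL-Complex_Analysis.Great_Picard"
begin

text \<open>
  Take a minimizing sequence \<open>(\<psi>\<^sub>n, \<psi>\<^sub>n')\<close>. For \<open>p < 2\<close> the \<open>L\<^sup>p\<close> term of a normalized
  function lies in \<open>[0, 1]\<close>, so the derivatives are bounded in \<open>L\<^sup>2\<close>; the estimate
  \<open>|\<psi>(x) - \<psi>(y)| \<le> \<parallel>\<psi>'\<parallel>\<^sup>2 / (2d) + d |x - y| / 2\<close> then makes the \<open>\<psi>\<^sub>n\<close> uniformly
  bounded and equicontinuous, and by Arzela-Ascoli a subsequence converges uniformly to some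
  \<open>\<psi>\<close> with \<open>\<parallel>\<psi>\<parallel>\<^sub>2 = 1\<close>. The covariant derivatives \<open>u\<^sub>n = \<psi>\<^sub>n' - i a \<psi>\<^sub>n\<close> form a
  Cauchy sequence in \<open>L\<^sup>2\<close>: by the parallelogram law
  \<open>\<parallel>u\<^sub>m - u\<^sub>n\<parallel>\<^sup>2 = 2\<parallel>u\<^sub>m\<parallel>\<^sup>2 + 2\<parallel>u\<^sub>n\<parallel>\<^sup>2 - 4\<parallel>(u\<^sub>m + u\<^sub>n)/2\<parallel>\<^sup>2\<close>, and minimality of
  \<open>\<lambda>\<close>, applied after rescaling to the midpoint \<open>(\<psi>\<^sub>m + \<psi>\<^sub>n)/2\<close> (whose \<open>L\<^sup>2\<close> norm tends
  to 1), bounds the last term from below by almost the sum of the first two. The \<open>L\<^sup>2\<close> limit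
  \<open>u\<close> yields the derivative \<open>u + i a \<psi>\<close> of \<open>\<psi>\<close>, and Fatou's lemma shows that the energy
  of \<open>\<psi>\<close> is at most \<open>\<lambda>\<close>.
\<close>

lemma le_sq_div_add_half:
  fixes c d :: real
  assumes "0 < d"
  shows "c \<le> c\<^sup>2 / (2 * d) + d / 2"
proof -
  have "0 \<le> (c - d)\<^sup>2" by simp
  then show ?thesis using assms by (simp add: field_simps power2_eq_square)
qed

lemma powr_le_quadratic:
  fixes t p :: real
  assumes "0 \<le> t" "0 < p" "p < 2"
  shows "t powr p \<le> p / 2 * t\<^sup>2 + (1 - p / 2)"
proof -
  have "t powr p * 1 \<le> (t powr p) powr (2 / p) / (2 / p) + 1 powr (2 / (2 - p)) / (2 / (2 - p))"
    by (rule Youngs_inequality) (use assms in \<open>auto simp: field_simps\<close>)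
  also have "(t powr p) powr (2 / p) = t\<^sup>2"
    using assms by (simp add: powr_powr powr_numeral)
  finally show ?thesis by (simp add: field_simps)
qed

lemma norm_add_sq_le:
  fixes u v :: "'a::real_normed_vector"
  shows "(norm (u + v))\<^sup>2 \<le> 2 * (norm u)\<^sup>2 + 2 * (norm v)\<^sup>2"
proof -
  have "(norm (u + v))\<^sup>2 \<le> (norm u + norm v)\<^sup>2"
    by (intro power_mono norm_triangle_ineq) simp
  also have "\<dots> \<le> 2 * (norm u)\<^sup>2 + 2 * (norm v)\<^sup>2"
    using sum_squares_bound[of "norm u" "norm v"] by (simp add: power2_sum)
  finally show ?thesis .
qed

lemma parallelogram_law:
  fixes u v :: "'a::real_inner"
  shows "(norm (u - v))\<^sup>2 + (norm (u + v))\<^sup>2 = 2 * (norm u)\<^sup>2 + 2 * (norm v)\<^sup>2"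
  by (simp add: power2_norm_eq_inner inner_simps inner_commute)

lemma set_integral_mono_set:
  fixes f :: "'a \<Rightarrow> real"
  assumes "set_integrable M A f" "B \<in> sets M" "B \<subseteq> A" "\<And>x. x \<in> A \<Longrightarrow> 0 \<le> f x"
  shows "(LINT x:B|M. f x) \<le> (LINT x:A|M. f x)"
  unfolding set_lebesgue_integral_def
proof (rule integral_mono)
  show "integrable M (\<lambda>x. indicator B x *\<^sub>R f x)"
    using set_integrable_subset[OF assms(1-3)] by (simp add: set_integrable_def)
  show "integrable M (\<lambda>x. indicator A x *\<^sub>R f x)"
    using assms(1) by (simp add: set_integrable_def)
  show "indicator B x *\<^sub>R f x \<le> indicator A x *\<^sub>R f x" for x
    using assms(3) assms(4)[of x] by (auto simp: indicator_def)
qed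

lemma integral_norm_add_le:
  fixes f g :: "'a \<Rightarrow> 'b::{banach, second_countable_topology}"
  assumes "integrable M f" "integrable M g"
  shows "(\<integral>x. norm (f x + g x) \<partial>M) \<le> (\<integral>x. norm (f x) \<partial>M) + (\<integral>x. norm (g x) \<partial>M)"
proof -
  have "(\<integral>x. norm (f x + g x) \<partial>M) \<le> (\<integral>x. norm (f x) + norm (g x) \<partial>M)"
    using assms by (intro integral_mono norm_triangle_ineq) auto
  then show ?thesis
    using assms by simp
qed

lemma eventually_pairs_by_sequences:
  assumes "\<And>I J. filterlim I sequentially sequentially \<Longrightarrow> filterlim J sequentially sequentially
      \<Longrightarrow> eventually (\<lambda>N. P (I N) (J N)) sequentially"
  shows "\<exists>N. \<forall>i\<ge>N. \<forall>j\<ge>N. P i j"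
proof (rule ccontr)
  assume "\<not> ?thesis"
  then have "\<forall>N. \<exists>i j. N \<le> i \<and> N \<le> j \<and> \<not> P i j"
    by blast
  then obtain I J where IJ: "\<And>N. N \<le> I N \<and> N \<le> J N \<and> \<not> P (I N) (J N)"
    by metis
  have "filterlim K sequentially sequentially" if "\<And>N. N \<le> K N" for K :: "nat \<Rightarrow> nat"
    unfolding filterlim_at_top eventually_sequentially using that le_trans by blast
  then have "eventually (\<lambda>N. P (I N) (J N)) sequentially"
    using IJ by (intro assms) auto
  then obtain N where "P (I N) (J N)"
    using eventually_happens'[OF sequentially_bot] by blast
  with IJ show False by blast
qed

section \<open>Square-integrable functions\<close>

definition square_integrable :: "'a measure \<Rightarrow> ('a \<Rightarrow> complex) \<Rightarrow> bool" where
  "square_integrable M f \<longleftrightarrow> f \<in> borel_measurable M \<and> integrable M (\<lambda>x. (cmod (f x))\<^sup>2)"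

definition sq_integral :: "'a measure \<Rightarrow> ('a \<Rightarrow> complex) \<Rightarrow> real" where
  "sq_integral M f = (\<integral>x. (cmod (f x))\<^sup>2 \<partial>M)"

lemma sq_integral_nonneg: "0 \<le> sq_integral M f"
  unfolding sq_integral_def by (rule integral_nonneg_AE) simp

lemma sq_integral_cmult: "sq_integral M (\<lambda>x. c * f x) = (cmod c)\<^sup>2 * sq_integral M f"
  unfolding sq_integral_def by (simp add: norm_mult power_mult_distrib)

lemma square_integrable_add:
  assumes "square_integrable M f" "square_integrable M g"
  shows "square_integrable M (\<lambda>x. f x + g x)"
  unfolding square_integrable_def
proof
  show meas: "(\<lambda>x. f x + g x) \<in> borel_measurable M"
    using assms by (auto simp: square_integrable_def)
  show "integrable M (\<lambda>x. (cmod (f x + g x))\<^sup>2)"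
  proof (rule Bochner_Integration.integrable_bound)
    show "integrable M (\<lambda>x. 2 * (cmod (f x))\<^sup>2 + 2 * (cmod (g x))\<^sup>2)"
      using assms by (simp add: square_integrable_def)
    show "(\<lambda>x. (cmod (f x + g x))\<^sup>2) \<in> borel_measurable M"
      using meas by measurable
    show "AE x in M. norm ((cmod (f x + g x))\<^sup>2) \<le> norm (2 * (cmod (f x))\<^sup>2 + 2 * (cmod (g x))\<^sup>2)"
      using norm_add_sq_le by (intro AE_I2) simp
  qed
qed

lemma square_integrable_cmult:
  assumes "square_integrable M f"
  shows "square_integrable M (\<lambda>x. c * f x)"
  using assms by (auto simp: square_integrable_def norm_mult power_mult_distrib)

lemma square_integrable_diff:
  assumes "square_integrable M f" "square_integrable M g"
  shows "square_integrable M (\<lambda>x. f x - g x)"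
  using square_integrable_add[OF assms(1) square_integrable_cmult[OF assms(2), of "-1"]] by simp

lemma sq_integral_le_diff_add:
  assumes "square_integrable M f" "square_integrable M g"
  shows "sq_integral M f \<le> 2 * sq_integral M (\<lambda>x. f x - g x) + 2 * sq_integral M g"
proof -
  have int_diff: "integrable M (\<lambda>x. (cmod (f x - g x))\<^sup>2)"
    using square_integrable_diff[OF assms] by (simp add: square_integrable_def)
  have int_f: "integrable M (\<lambda>x. (cmod (f x))\<^sup>2)" and int_g: "integrable M (\<lambda>x. (cmod (g x))\<^sup>2)"
    using assms by (simp_all add: square_integrable_def)
  have "sq_integral M f \<le> (\<integral>x. 2 * (cmod (f x - g x))\<^sup>2 + 2 * (cmod (g x))\<^sup>2 \<partial>M)"
    unfolding sq_integral_def
  proof (rule integral_mono)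
    show "(cmod (f x))\<^sup>2 \<le> 2 * (cmod (f x - g x))\<^sup>2 + 2 * (cmod (g x))\<^sup>2" for x
      using norm_add_sq_le[of "f x - g x" "g x"] by simp
  qed (use int_f int_g int_diff in simp_all)
  also have "\<dots> = 2 * sq_integral M (\<lambda>x. f x - g x) + 2 * sq_integral M g"
    using int_g int_diff by (simp add: sq_integral_def)
  finally show ?thesis .
qed

lemma sq_integral_parallelogram:
  assumes "square_integrable M f" "square_integrable M g"
  shows "sq_integral M (\<lambda>x. f x - g x)
      = 2 * sq_integral M f + 2 * sq_integral M g - 4 * sq_integral M (\<lambda>x. (f x + g x) / 2)"
proof -
  have "(cmod (u - v))\<^sup>2 = 2 * (cmod u)\<^sup>2 + 2 * (cmod v)\<^sup>2 - 4 * (cmod ((u + v) / 2))\<^sup>2" for u v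
    using parallelogram_law[of u v] by (simp add: norm_divide power_divide)
  moreover have "integrable M (\<lambda>x. (cmod ((f x + g x) / 2))\<^sup>2)"
    using square_integrable_cmult[OF square_integrable_add[OF assms], of "1/2"]
    by (simp add: square_integrable_def)
  ultimately show ?thesis
    using assms by (simp add: sq_integral_def square_integrable_def)
qed

lemma (in finite_measure) square_integrable_integrable:
  assumes "square_integrable M f"
  shows "integrable M f"
proof (rule Bochner_Integration.integrable_bound)
  show "integrable M (\<lambda>x. (cmod (f x))\<^sup>2 / 2 + 1 / 2)"
    using assms by (simp add: square_integrable_def)
  show "AE x in M. norm (f x) \<le> norm ((cmod (f x))\<^sup>2 / 2 + 1 / 2)"
    using le_sq_div_add_half[of 1] by (intro AE_I2) simp
qed (use assms in \<open>simp add: square_integrable_def\<close>)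

lemma (in finite_measure) integral_norm_le_sq_integral:
  assumes "square_integrable M f" "0 < d"
  shows "(\<integral>x. cmod (f x) \<partial>M) \<le> sq_integral M f / (2 * d) + d / 2 * measure M (space M)"
proof -
  have int_sq: "integrable M (\<lambda>x. (cmod (f x))\<^sup>2)"
    using assms(1) by (simp add: square_integrable_def)
  have "(\<integral>x. cmod (f x) \<partial>M) \<le> (\<integral>x. (cmod (f x))\<^sup>2 / (2 * d) + d / 2 \<partial>M)"
  proof (rule integral_mono)
    show "cmod (f x) \<le> (cmod (f x))\<^sup>2 / (2 * d) + d / 2" for x
      by (rule le_sq_div_add_half[OF assms(2)])
  qed (use int_sq square_integrable_integrable[OF assms(1)] in simp_all)
  also have "\<dots> = sq_integral M f / (2 * d) + d / 2 * measure M (space M)"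
    using int_sq by (simp add: sq_integral_def)
  finally show ?thesis .
qed

lemma (in finite_measure) integral_norm_less_of_sq_integral_less:
  assumes f: "square_integrable M f" and e: "0 < e"
    and small: "sq_integral M f < e\<^sup>2 / (measure M (space M) + 1)"
  shows "(\<integral>x. cmod (f x) \<partial>M) < e"
proof -
  define m where "m = measure M (space M)"
  define d where "d = e / (m + 1)"
  have m: "0 \<le> m" by (simp add: m_def)
  have d: "0 < d" using e m by (simp add: d_def)
  have "sq_integral M f * (m + 1) < e\<^sup>2"
    using small m by (simp add: m_def pos_less_divide_eq add_nonneg_pos)
  then have "sq_integral M f / (2 * d) < e / 2"
    using e m by (simp add: d_def field_simps power2_eq_square)
  moreover have "d / 2 * m < e / 2"
    using e m by (simp add: d_def field_simps)
  moreover have "(\<integral>x. cmod (f x) \<partial>M) \<le> sq_integral M f / (2 * d) + d / 2 * m"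
    unfolding m_def by (rule integral_norm_le_sq_integral[OF f d])
  ultimately show ?thesis by linarith
qed

lemma (in finite_measure) integral_tendsto_bounded:
  fixes F :: "nat \<Rightarrow> 'a \<Rightarrow> 'b::{banach, second_countable_topology}"
  assumes "\<And>n. F n \<in> borel_measurable M" "G \<in> borel_measurable M"
    and "\<And>n x. x \<in> space M \<Longrightarrow> norm (F n x) \<le> B"
    and "AE x in M. (\<lambda>n. F n x) \<longlonglongrightarrow> G x"
  shows "(\<lambda>n. integral\<^sup>L M (F n)) \<longlonglongrightarrow> integral\<^sup>L M G"
  by (rule integral_dominated_convergence[where w = "\<lambda>_. B"]) (use assms in auto)

lemma sq_integral_AE_limit:
  fixes F :: "nat \<Rightarrow> 'a \<Rightarrow> complex"
  assumes F: "\<And>n. square_integrable M (F n)" and V: "V \<in> borel_measurable M"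
    and lim: "AE x in M. (\<lambda>n. F n x) \<longlonglongrightarrow> V x"
    and bound: "eventually (\<lambda>n. sq_integral M (F n) \<le> C) sequentially"
  shows "square_integrable M V" "sq_integral M V \<le> C"
proof -
  obtain n where "sq_integral M (F n) \<le> C"
    using bound eventually_sequentially by auto
  then have C: "0 \<le> C"
    using sq_integral_nonneg order_trans by blast
  have nn_F: "(\<integral>\<^sup>+x. ennreal ((cmod (F n x))\<^sup>2) \<partial>M) = ennreal (sq_integral M (F n))" for n
    using F[of n] by (simp add: square_integrable_def sq_integral_def nn_integral_eq_integral)
  have "(\<integral>\<^sup>+x. ennreal ((cmod (V x))\<^sup>2) \<partial>M) = (\<integral>\<^sup>+x. liminf (\<lambda>n. ennreal ((cmod (F n x))\<^sup>2)) \<partial>M)"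
  proof (rule nn_integral_cong_AE)
    show "AE x in M. ennreal ((cmod (V x))\<^sup>2) = liminf (\<lambda>n. ennreal ((cmod (F n x))\<^sup>2))"
      using lim
    proof eventually_elim
      case (elim x)
      then have "(\<lambda>n. ennreal ((cmod (F n x))\<^sup>2)) \<longlonglongrightarrow> ennreal ((cmod (V x))\<^sup>2)"
        by (intro tendsto_ennrealI tendsto_power tendsto_norm)
      from lim_imp_Liminf[OF trivial_limit_sequentially this] show ?case by simp
    qed
  qed
  also have "\<dots> \<le> liminf (\<lambda>n. \<integral>\<^sup>+x. ennreal ((cmod (F n x))\<^sup>2) \<partial>M)"
    using F by (intro nn_integral_liminf) (simp add: square_integrable_def borel_measurable_integrable)
  also have "\<dots> \<le> liminf (\<lambda>n. ennreal C)"
  proof (rule Liminf_mono)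
    show "\<forall>\<^sub>F n in sequentially. (\<integral>\<^sup>+x. ennreal ((cmod (F n x))\<^sup>2) \<partial>M) \<le> ennreal C"
      using bound by eventually_elim (simp add: nn_F ennreal_leI)
  qed
  also have "\<dots> = ennreal C" by (simp add: Liminf_const)
  finally have nn_V: "(\<integral>\<^sup>+x. ennreal ((cmod (V x))\<^sup>2) \<partial>M) \<le> ennreal C" .
  have int_V: "integrable M (\<lambda>x. (cmod (V x))\<^sup>2)"
  proof (rule integrableI_bounded)
    show "(\<integral>\<^sup>+x. ennreal (norm ((cmod (V x))\<^sup>2)) \<partial>M) < \<infinity>"
      using nn_V by (simp add: le_less_trans)
  qed (use V in measurable)
  then show "square_integrable M V"
    using V by (simp add: square_integrable_def)
  show "sq_integral M V \<le> C"
    using nn_V C int_V by (simp add: sq_integral_def nn_integral_eq_integral ennreal_le_iff)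
qed

lemma sq_integral_AE_limit_le:
  fixes F :: "nat \<Rightarrow> 'a \<Rightarrow> complex"
  assumes F: "\<And>n. square_integrable M (F n)" and V: "V \<in> borel_measurable M"
    and lim: "AE x in M. (\<lambda>n. F n x) \<longlonglongrightarrow> V x"
    and L: "(\<lambda>n. sq_integral M (F n)) \<longlonglongrightarrow> L"
  shows "sq_integral M V \<le> L"
proof (rule field_le_epsilon)
  fix e :: real assume "0 < e"
  then have "eventually (\<lambda>n. sq_integral M (F n) \<le> L + e) sequentially"
    using order_tendstoD(2)[OF L, of "L + e"] by (auto elim: eventually_mono)
  then show "sq_integral M V \<le> L + e"
    by (rule sq_integral_AE_limit(2)[OF F V lim])
qed

lemma sq_integral_diff_AE_limit:
  fixes U :: "nat \<Rightarrow> 'a \<Rightarrow> complex"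
  assumes f: "square_integrable M f" and U: "\<And>j. square_integrable M (U j)"
    and V: "V \<in> borel_measurable M" and lim: "AE x in M. (\<lambda>j. U j x) \<longlonglongrightarrow> V x"
    and bound: "eventually (\<lambda>j. sq_integral M (\<lambda>x. f x - U j x) \<le> C) sequentially"
  shows "square_integrable M (\<lambda>x. f x - V x) \<and> sq_integral M (\<lambda>x. f x - V x) \<le> C"
proof -
  have "(\<lambda>x. f x - V x) \<in> borel_measurable M"
    using f V by (auto simp: square_integrable_def)
  moreover have "AE x in M. (\<lambda>j. f x - U j x) \<longlonglongrightarrow> f x - V x"
    using lim by eventually_elim (intro tendsto_intros)
  ultimately show ?thesis
    using sq_integral_AE_limit[where F = "\<lambda>j x. f x - U j x", OF square_integrable_diff[OF f U]] bound
    by blast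
qed

lemma (in finite_measure) integral_norm_tendsto_zero:
  fixes F :: "nat \<Rightarrow> 'a \<Rightarrow> complex"
  assumes F: "\<And>n. square_integrable M (F n)" and lim: "(\<lambda>n. sq_integral M (F n)) \<longlonglongrightarrow> 0"
  shows "(\<lambda>n. \<integral>x. cmod (F n x) \<partial>M) \<longlonglongrightarrow> 0"
proof (rule LIMSEQ_I)
  fix e :: real assume e: "0 < e"
  then have "eventually (\<lambda>n. sq_integral M (F n) < e\<^sup>2 / (measure M (space M) + 1)) sequentially"
    by (intro order_tendstoD(2)[OF lim]) (simp add: add_nonneg_pos)
  then have "eventually (\<lambda>n. norm ((\<integral>x. cmod (F n x) \<partial>M) - 0) < e) sequentially"
    by eventually_elim (simp add: integral_norm_less_of_sq_integral_less[OF F e] integral_nonneg_AE)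
  then show "\<exists>N. \<forall>n\<ge>N. norm ((\<integral>x. cmod (F n x) \<partial>M) - 0) < e"
    by (simp add: eventually_sequentially)
qed

lemma (in finite_measure) L1_Cauchy_of_sq_integral_Cauchy:
  fixes U :: "nat \<Rightarrow> 'a \<Rightarrow> complex"
  assumes U: "\<And>j. square_integrable M (U j)"
    and Cauchy: "\<And>e. 0 < e \<Longrightarrow> \<exists>N. \<forall>i\<ge>N. \<forall>j\<ge>N. sq_integral M (\<lambda>x. U i x - U j x) < e"
    and e: "0 < e"
  shows "\<exists>N. \<forall>i\<ge>N. \<forall>j\<ge>N. (\<integral>x. norm (U i x - U j x) \<partial>M) < e"
proof -
  obtain N where "\<forall>i\<ge>N. \<forall>j\<ge>N. sq_integral M (\<lambda>x. U i x - U j x) < e\<^sup>2 / (measure M (space M) + 1)"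
    using Cauchy[of "e\<^sup>2 / (measure M (space M) + 1)"] e by (auto simp: add_nonneg_pos)
  then show ?thesis
    using integral_norm_less_of_sq_integral_less[OF square_integrable_diff[OF U U] e] by blast
qed

lemma (in finite_measure) square_integrable_Cauchy_subseq:
  fixes U :: "nat \<Rightarrow> 'a \<Rightarrow> complex"
  assumes U: "\<And>j. square_integrable M (U j)"
    and Cauchy: "\<And>e. 0 < e \<Longrightarrow> \<exists>N. \<forall>i\<ge>N. \<forall>j\<ge>N. sq_integral M (\<lambda>x. U i x - U j x) < e"
  obtains r V where "strict_mono r" "square_integrable M V"
    "AE x in M. (\<lambda>i. U (r i) x) \<longlonglongrightarrow> V x"
    "(\<lambda>i. sq_integral M (\<lambda>x. U (r i) x - V x)) \<longlonglongrightarrow> 0"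
proof -
  obtain r where r: "strict_mono r" and AE_Cauchy: "AE x in M. Cauchy (\<lambda>i. U (r i) x)"
    using cauchy_L1_AE_cauchy_subseq[of M U] square_integrable_integrable[OF U]
      L1_Cauchy_of_sq_integral_Cauchy[OF U Cauchy] by blast
  define V where "V x = lim (\<lambda>i. U (r i) x)" for x
  have V: "V \<in> borel_measurable M"
    unfolding V_def using U by (intro borel_measurable_lim_metric) (simp add: square_integrable_def)
  have lim: "AE x in M. (\<lambda>i. U (r i) x) \<longlonglongrightarrow> V x"
    using AE_Cauchy by eventually_elim (simp add: V_def Cauchy_convergent_iff convergent_LIMSEQ_iff)
  have tail: "square_integrable M (\<lambda>x. U (r i) x - V x) \<and> sq_integral M (\<lambda>x. U (r i) x - V x) \<le> e"
    if N: "\<forall>i\<ge>N. \<forall>j\<ge>N. sq_integral M (\<lambda>x. U i x - U j x) < e" and i: "N \<le> i" for N i e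
  proof (rule sq_integral_diff_AE_limit[where U = "\<lambda>j. U (r j)", OF U U V lim])
    show "eventually (\<lambda>j. sq_integral M (\<lambda>x. U (r i) x - U (r j) x) \<le> e) sequentially"
      unfolding eventually_sequentially using N i seq_suble[OF r] by (meson le_trans less_imp_le)
  qed
  have "(\<lambda>i. sq_integral M (\<lambda>x. U (r i) x - V x)) \<longlonglongrightarrow> 0"
  proof (rule LIMSEQ_I)
    fix e :: real assume "0 < e"
    then obtain N where N: "\<forall>i\<ge>N. \<forall>j\<ge>N. sq_integral M (\<lambda>x. U i x - U j x) < e / 2"
      using Cauchy[of "e / 2"] by auto
    have "norm (sq_integral M (\<lambda>x. U (r i) x - V x) - 0) < e" if "N \<le> i" for i
      using tail[OF N that] sq_integral_nonneg[of M] \<open>0 < e\<close> by simp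
    then show "\<exists>N. \<forall>i\<ge>N. norm (sq_integral M (\<lambda>x. U (r i) x - V x) - 0) < e"
      by blast
  qed
  moreover have "square_integrable M V"
  proof -
    obtain N where "\<forall>i\<ge>N. \<forall>j\<ge>N. sq_integral M (\<lambda>x. U i x - U j x) < 1"
      using Cauchy[of 1] by auto
    then have "square_integrable M (\<lambda>x. U (r N) x - (U (r N) x - V x))"
      using tail square_integrable_diff[OF U] by blast
    then show ?thesis by simp
  qed
  ultimately show ?thesis
    using that r lim by simp
qed

section \<open>The circle as the interval from -pi to pi\<close>

text \<open>Unlike \<^const>\<open>circ_mean_pow\<close>, integrals against this measure are not normalized:
  the total mass is \<open>2 * pi\<close>.\<close>

abbreviation circle_measure :: "real measure" where
  "circle_measure \<equiv> restrict_space lborel {-pi..pi}"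

lemma finite_measure_circle_measure: "finite_measure circle_measure"
  by (intro finite_measureI) (simp add: emeasure_restrict_space)

interpretation circle: finite_measure circle_measure
  by (rule finite_measure_circle_measure)

lemma measure_circle_measure: "measure circle_measure {-pi..pi} = 2 * pi"
  by (simp add: measure_restrict_space)

lemma set_integral_eq_circle:
  fixes f :: "real \<Rightarrow> 'b::{banach, second_countable_topology}"
  shows "(LINT x:{-pi..pi}|lborel. f x) = integral\<^sup>L circle_measure f"
  by (simp add: set_lebesgue_integral_def integral_restrict_space)

lemma set_integrable_iff_circle:
  fixes f :: "real \<Rightarrow> 'b::{banach, second_countable_topology}"
  shows "set_integrable lborel {-pi..pi} f \<longleftrightarrow> integrable circle_measure f"
  by (simp add: set_integrable_eq)

lemma set_borel_measurable_iff_circle: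
  fixes f :: "real \<Rightarrow> 'b::real_normed_vector"
  shows "set_borel_measurable lborel {-pi..pi} f \<longleftrightarrow> f \<in> borel_measurable circle_measure"
  by (simp add: set_borel_measurable_def borel_measurable_restrict_space_iff)

lemma continuous_on_borel_measurable_circle:
  "continuous_on {-pi..pi} f \<Longrightarrow> f \<in> borel_measurable circle_measure"
  by (metis borel_measurable_continuous_on_restrict measurable_cong_sets sets_lborel sets_restrict_space)

lemma continuous_on_integrable_circle:
  fixes f :: "real \<Rightarrow> 'b::{banach, second_countable_topology}"
  shows "continuous_on {-pi..pi} f \<Longrightarrow> integrable circle_measure f"
  unfolding set_integrable_iff_circle[symmetric] set_integrable_def
  by (rule borel_integrable_compact) simp_all

lemma square_integrable_continuous_on:
  assumes "continuous_on {-pi..pi} f"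
  shows "square_integrable circle_measure f"
  unfolding square_integrable_def
  using assms by (auto intro!: continuous_on_borel_measurable_circle continuous_on_integrable_circle
      continuous_intros)

lemma circ_mean_pow_eq_circle:
  "circ_mean_pow p f = (\<integral>x. cmod (f x) powr p \<partial>circle_measure) / (2 * pi)"
  unfolding circ_mean_pow_def set_integral_eq_circle ..

lemma circ_mean_pow_two: "circ_mean_pow 2 f = sq_integral circle_measure f / (2 * pi)"
  unfolding circ_mean_pow_eq_circle sq_integral_def by (simp add: powr_numeral)

lemma tendsto_integral_norm_diff_bounded:
  assumes F: "\<And>n. continuous_on {-pi..pi} (F n)" and G: "continuous_on {-pi..pi} G"
    and bound: "\<And>n x. x \<in> {-pi..pi} \<Longrightarrow> cmod (F n x) \<le> M"
    and lim: "\<And>x. (\<lambda>n. F n x) \<longlonglongrightarrow> G x"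
  shows "(\<lambda>n. \<integral>x. cmod (F n x - G x) \<partial>circle_measure) \<longlonglongrightarrow> 0"
proof -
  have G_bound: "cmod (G x) \<le> M" if "x \<in> {-pi..pi}" for x
    using bound[OF that] by (intro LIMSEQ_le_const2[OF tendsto_norm[OF lim]]) auto
  have "(\<lambda>n. \<integral>x. cmod (F n x - G x) \<partial>circle_measure) \<longlonglongrightarrow> (\<integral>x. cmod (G x - G x) \<partial>circle_measure)"
  proof (rule circle.integral_tendsto_bounded)
    show "(\<lambda>x. cmod (F n x - G x)) \<in> borel_measurable circle_measure" for n
      using F G by (intro continuous_on_borel_measurable_circle continuous_intros)
    show "(\<lambda>x. cmod (G x - G x)) \<in> borel_measurable circle_measure" by simp
    show "norm (cmod (F n x - G x)) \<le> M + M" if "x \<in> space circle_measure" for n x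
      using norm_triangle_ineq4[of "F n x" "G x"] bound[of x n] G_bound[of x] that by simp
    show "AE x in circle_measure. (\<lambda>n. cmod (F n x - G x)) \<longlonglongrightarrow> cmod (G x - G x)"
      using lim by (intro AE_I2 tendsto_intros)
  qed
  then show ?thesis by simp
qed

lemma periodic_shift_int:
  assumes "\<And>x. f (x + 2 * pi) = f x"
  shows "f (x + of_int k * (2 * pi)) = f x"
proof (induction k rule: int_induct[where k = 0])
  case (step1 i)
  then show ?case
    using assms[of "x + of_int i * (2 * pi)"] by (simp add: algebra_simps)
next
  case (step2 i)
  then show ?case
    using assms[of "x + of_int (i - 1) * (2 * pi)"] by (simp add: algebra_simps)
qed simp

lemma shift_int_into_circle: "\<exists>k::int. x + of_int k * (2 * pi) \<in> {-pi..pi}"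
proof
  define k where "k = \<lfloor>(x + pi) / (2 * pi)\<rfloor>"
  have "of_int k * (2 * pi) \<le> x + pi" "x + pi < (of_int k + 1) * (2 * pi)"
    using floor_divide_lower[of "2 * pi" "x + pi"] floor_divide_upper[of "2 * pi" "x + pi"]
    by (simp_all add: k_def)
  then show "x + of_int (- k) * (2 * pi) \<in> {-pi..pi}"
    by (simp add: algebra_simps)
qed

section \<open>Functions in H1\<close>

lemma H1_with_deriv_iff:
  "H1_with_deriv \<psi> g \<longleftrightarrow>
     (\<forall>x. \<psi> (x + 2 * pi) = \<psi> x) \<and> square_integrable circle_measure g \<and>
     (\<forall>x\<in>{-pi..pi}. \<psi> x = \<psi> (-pi) + (LINT t:{-pi..x}|lborel. g t))"
  unfolding H1_with_deriv_def square_integrable_def set_borel_measurable_iff_circle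
    set_integrable_iff_circle by blast

lemma H1_with_derivD:
  assumes "H1_with_deriv \<psi> g"
  shows "\<psi> (x + 2 * pi) = \<psi> x" "square_integrable circle_measure g"
    "set_integrable lborel {-pi..pi} g"
    "x \<in> {-pi..pi} \<Longrightarrow> \<psi> x = \<psi> (-pi) + (LINT t:{-pi..x}|lborel. g t)"
  using assms circle.square_integrable_integrable
  unfolding H1_with_deriv_iff set_integrable_iff_circle by blast+

lemma H1_increment:
  assumes H: "H1_with_deriv \<psi> g" and xy: "-pi \<le> y" "y \<le> x" "x \<le> pi"
  shows "\<psi> x - \<psi> y = (LINT t:{y<..x}|lborel. g t)"
proof -
  have int: "set_integrable lborel A g" if "A \<subseteq> {-pi..pi}" "A \<in> sets lborel" for A
    using set_integrable_subset[OF H1_with_derivD(3)[OF H]] that by blast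
  have "(LINT t:{-pi..y} \<union> {y<..x}|lborel. g t) = (LINT t:{-pi..y}|lborel. g t) + (LINT t:{y<..x}|lborel. g t)"
    by (rule set_integral_Un) (use xy in \<open>auto intro!: int\<close>)
  moreover have "{-pi..y} \<union> {y<..x} = {-pi..x}" using xy by auto
  ultimately have "(LINT t:{-pi..x}|lborel. g t) = (LINT t:{-pi..y}|lborel. g t) + (LINT t:{y<..x}|lborel. g t)"
    by simp
  then show ?thesis
    using H1_with_derivD(4)[OF H, of x] H1_with_derivD(4)[OF H, of y] xy by simp
qed

lemma H1_increment_bound_ordered:
  assumes H: "H1_with_deriv \<psi> g" and xy: "-pi \<le> y" "y \<le> x" "x \<le> pi" and d: "0 < d"
  shows "cmod (\<psi> x - \<psi> y) \<le> sq_integral circle_measure g / (2 * d) + d / 2 * (x - y)"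
proof -
  have sub: "{y<..x} \<subseteq> {-pi..pi}" using xy by auto
  have int_g: "set_integrable lborel {y<..x} g"
    by (rule set_integrable_subset[OF H1_with_derivD(3)[OF H] _ sub]) simp
  have int_sq_pi: "set_integrable lborel {-pi..pi} (\<lambda>t. (cmod (g t))\<^sup>2)"
    using H1_with_derivD(2)[OF H] by (simp add: square_integrable_def set_integrable_iff_circle)
  have int_sq: "set_integrable lborel {y<..x} (\<lambda>t. (cmod (g t))\<^sup>2)"
    by (rule set_integrable_subset[OF int_sq_pi _ sub]) simp
  have int_const: "set_integrable lborel {y<..x} (\<lambda>_. d / 2)"
    using xy by (simp add: set_integrable_def)
  have "cmod (\<psi> x - \<psi> y) \<le> (LINT t:{y<..x}|lborel. cmod (g t))"
    unfolding H1_increment[OF H xy] by (rule set_integral_norm_bound[OF int_g])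
  also have "\<dots> \<le> (LINT t:{y<..x}|lborel. (cmod (g t))\<^sup>2 / (2 * d) + d / 2)"
    using int_g int_sq int_const le_sq_div_add_half[OF d]
    by (intro set_integral_mono) (auto simp: set_integrable_norm)
  also have "\<dots> = (LINT t:{y<..x}|lborel. (cmod (g t))\<^sup>2) / (2 * d) + d / 2 * (x - y)"
    using int_sq int_const xy
    by (simp add: set_integral_add set_integral_divide_zero set_integral_const measure_lborel_Ioc)
  also have "(LINT t:{y<..x}|lborel. (cmod (g t))\<^sup>2) \<le> (LINT t:{-pi..pi}|lborel. (cmod (g t))\<^sup>2)"
    by (rule set_integral_mono_set[OF int_sq_pi _ sub]) simp_all
  finally show ?thesis
    using d by (simp add: set_integral_eq_circle sq_integral_def divide_right_mono)
qed

lemma H1_increment_bound: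
  assumes "H1_with_deriv \<psi> g" "x \<in> {-pi..pi}" "y \<in> {-pi..pi}" "0 < d"
  shows "cmod (\<psi> x - \<psi> y) \<le> sq_integral circle_measure g / (2 * d) + d / 2 * \<bar>x - y\<bar>"
  using H1_increment_bound_ordered[OF assms(1) _ _ _ assms(4), of y x]
    H1_increment_bound_ordered[OF assms(1) _ _ _ assms(4), of x y] assms(2,3)
  by (cases "y \<le> x") (auto simp: norm_minus_commute)

lemma H1_uniform_modulus:
  assumes H: "H1_with_deriv \<psi> g" and B: "sq_integral circle_measure g \<le> B"
    and xy: "x \<in> {-pi..pi}" "y \<in> {-pi..pi}" and e: "0 < e" and close: "\<bar>x - y\<bar> < e\<^sup>2 / (B + 1)"
  shows "cmod (\<psi> x - \<psi> y) < e"
proof -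
  have B0: "0 \<le> B" using B sq_integral_nonneg order_trans by blast
  define d where "d = (B + 1) / e"
  have d: "0 < d" using B0 e by (simp add: d_def)
  have "sq_integral circle_measure g / (2 * d) \<le> B / (2 * d)"
    using B d by (simp add: divide_right_mono)
  also have "\<dots> < e / 2"
    using B0 e by (simp add: d_def field_simps)
  finally have first: "sq_integral circle_measure g / (2 * d) < e / 2" .
  have "d / 2 * \<bar>x - y\<bar> < d / 2 * (e\<^sup>2 / (B + 1))"
    using close d by (intro mult_strict_left_mono) auto
  also have "\<dots> = e / 2"
    using B0 e by (simp add: d_def power2_eq_square divide_simps)
  finally have "d / 2 * \<bar>x - y\<bar> < e / 2" .
  then show ?thesis
    using H1_increment_bound[OF H xy d] first by linarith
qed

lemma H1_continuous_on:
  assumes H: "H1_with_deriv \<psi> g"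
  shows "continuous_on {-pi..pi} \<psi>"
  unfolding continuous_on_iff
proof (intro ballI allI impI)
  fix x e :: real assume x: "x \<in> {-pi..pi}" and e: "0 < e"
  define B where "B = sq_integral circle_measure g"
  have "0 < e\<^sup>2 / (B + 1)"
    using e sq_integral_nonneg[of circle_measure g] by (simp add: B_def add_nonneg_pos)
  moreover have "dist (\<psi> y) (\<psi> x) < e" if "y \<in> {-pi..pi}" "dist y x < e\<^sup>2 / (B + 1)" for y
    using H1_uniform_modulus[OF H order_refl that(1) x e] that(2) by (simp add: B_def dist_norm)
  ultimately show "\<exists>d>0. \<forall>y\<in>{-pi..pi}. dist y x < d \<longrightarrow> dist (\<psi> y) (\<psi> x) < e"
    by blast
qed

lemma norm_le_one_plus_oscillation:
  assumes f: "square_integrable circle_measure f" "sq_integral circle_measure f = 2 * pi"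
    and osc: "\<And>y z. y \<in> {-pi..pi} \<Longrightarrow> z \<in> {-pi..pi} \<Longrightarrow> cmod (f y - f z) \<le> C"
    and y: "y \<in> {-pi..pi}"
  shows "cmod (f y) \<le> 1 + C"
proof (rule ccontr)
  define m where "m = cmod (f y) - C"
  assume "\<not> cmod (f y) \<le> 1 + C"
  then have m: "1 < m" by (simp add: m_def)
  have "m\<^sup>2 \<le> (cmod (f z))\<^sup>2" if "z \<in> {-pi..pi}" for z
  proof (rule power_mono)
    show "m \<le> cmod (f z)"
      using norm_triangle_sub[of "f y" "f z"] osc[OF y that] by (simp add: m_def)
  qed (use m in simp)
  then have "(\<integral>_. m\<^sup>2 \<partial>circle_measure) \<le> sq_integral circle_measure f"
    using f(1) unfolding sq_integral_def square_integrable_def by (intro integral_mono) auto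
  then have "m\<^sup>2 \<le> 1"
    using f(2) by (simp add: measure_circle_measure)
  moreover have "1 < m\<^sup>2"
    using m by (simp add: less_1_mult power2_eq_square)
  ultimately show False by simp
qed

lemma H1_sup_bound:
  assumes H: "H1_with_deriv \<psi> g" and c: "circ_mean_pow 2 \<psi> = 1"
    and B: "sq_integral circle_measure g \<le> B" and x: "x \<in> {-pi..pi}"
  shows "cmod (\<psi> x) \<le> 1 + (B / 2 + pi)"
proof (rule norm_le_one_plus_oscillation[OF _ _ _ x])
  show "square_integrable circle_measure \<psi>"
    by (rule square_integrable_continuous_on[OF H1_continuous_on[OF H]])
  show "sq_integral circle_measure \<psi> = 2 * pi"
    using c by (simp add: circ_mean_pow_two)
  show "cmod (\<psi> y - \<psi> z) \<le> B / 2 + pi" if "y \<in> {-pi..pi}" "z \<in> {-pi..pi}" for y z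
  proof -
    have "\<bar>y - z\<bar> \<le> 2 * pi" using that by auto
    then show ?thesis
      using H1_increment_bound[OF H that, of 1] B by simp
  qed
qed

lemma H1_add:
  assumes H1: "H1_with_deriv \<psi>1 g1" and H2: "H1_with_deriv \<psi>2 g2"
  shows "H1_with_deriv (\<lambda>x. \<psi>1 x + \<psi>2 x) (\<lambda>x. g1 x + g2 x)"
  unfolding H1_with_deriv_iff
proof (intro conjI allI ballI)
  show "\<psi>1 (x + 2 * pi) + \<psi>2 (x + 2 * pi) = \<psi>1 x + \<psi>2 x" for x
    using H1_with_derivD(1)[OF H1] H1_with_derivD(1)[OF H2] by simp
  show "square_integrable circle_measure (\<lambda>x. g1 x + g2 x)"
    by (rule square_integrable_add[OF H1_with_derivD(2)[OF H1] H1_with_derivD(2)[OF H2]])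
  fix x :: real assume x: "x \<in> {-pi..pi}"
  have "set_integrable lborel {-pi..x} g" if "set_integrable lborel {-pi..pi} g" for g :: "real \<Rightarrow> complex"
    by (rule set_integrable_subset[OF that]) (use x in auto)
  then have "(LINT t:{-pi..x}|lborel. g1 t + g2 t) = (LINT t:{-pi..x}|lborel. g1 t) + (LINT t:{-pi..x}|lborel. g2 t)"
    using H1_with_derivD(3)[OF H1] H1_with_derivD(3)[OF H2] by (simp add: set_integral_add)
  then show "\<psi>1 x + \<psi>2 x = \<psi>1 (-pi) + \<psi>2 (-pi) + (LINT t:{-pi..x}|lborel. g1 t + g2 t)"
    using H1_with_derivD(4)[OF H1 x] H1_with_derivD(4)[OF H2 x] by simp
qed

lemma H1_cmult:
  assumes H: "H1_with_deriv \<psi> g"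
  shows "H1_with_deriv (\<lambda>x. c * \<psi> x) (\<lambda>x. c * g x)"
  unfolding H1_with_deriv_iff
proof (intro conjI allI ballI)
  show "c * \<psi> (x + 2 * pi) = c * \<psi> x" for x
    using H1_with_derivD(1)[OF H] by simp
  show "square_integrable circle_measure (\<lambda>x. c * g x)"
    by (rule square_integrable_cmult[OF H1_with_derivD(2)[OF H]])
  show "c * \<psi> x = c * \<psi> (-pi) + (LINT t:{-pi..x}|lborel. c * g t)" if "x \<in> {-pi..pi}" for x
    using H1_with_derivD(4)[OF H that] by (simp add: set_integral_mult_right distrib_left)
qed

lemma H1_with_deriv_of_L1_limit:
  assumes H: "\<And>j. H1_with_deriv (P j) (Q j)" and conv: "\<And>x. (\<lambda>j. P j x) \<longlonglongrightarrow> \<psi> x"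
    and g: "square_integrable circle_measure g"
    and L1: "(\<lambda>j. \<integral>x. cmod (Q j x - g x) \<partial>circle_measure) \<longlonglongrightarrow> 0"
  shows "H1_with_deriv \<psi> g"
  unfolding H1_with_deriv_iff
proof (intro conjI allI ballI g)
  show "\<psi> (x + 2 * pi) = \<psi> x" for x
    using conv[of "x + 2 * pi"] conv[of x] H1_with_derivD(1)[OF H] by (simp add: LIMSEQ_unique)
  fix x :: real assume x: "x \<in> {-pi..pi}"
  have sub: "{-pi..x} \<subseteq> {-pi..pi}" using x by auto
  have int_pi: "set_integrable lborel {-pi..pi} (\<lambda>t. Q j t - g t)" for j
    using H1_with_derivD(3)[OF H] circle.square_integrable_integrable[OF g]
    by (simp add: set_integrable_iff_circle)
  have int_x: "set_integrable lborel {-pi..x} h" if "set_integrable lborel {-pi..pi} h" for h :: "real \<Rightarrow> complex"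
    by (rule set_integrable_subset[OF that _ sub]) simp
  have "norm ((LINT t:{-pi..x}|lborel. Q j t) - (LINT t:{-pi..x}|lborel. g t))
      \<le> (\<integral>t. cmod (Q j t - g t) \<partial>circle_measure)" for j
  proof -
    have "(LINT t:{-pi..x}|lborel. Q j t) - (LINT t:{-pi..x}|lborel. g t) = (LINT t:{-pi..x}|lborel. Q j t - g t)"
      using H1_with_derivD(3)[OF H] circle.square_integrable_integrable[OF g]
      by (simp add: set_integral_diff int_x set_integrable_iff_circle)
    also have "norm \<dots> \<le> (LINT t:{-pi..x}|lborel. cmod (Q j t - g t))"
      by (rule set_integral_norm_bound[OF int_x[OF int_pi]])
    also have "\<dots> \<le> (LINT t:{-pi..pi}|lborel. cmod (Q j t - g t))"
      using int_pi[of j] sub by (intro set_integral_mono_set) (auto simp: set_integrable_norm)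
    finally show ?thesis by (simp add: set_integral_eq_circle)
  qed
  then have "(\<lambda>j. (LINT t:{-pi..x}|lborel. Q j t) - (LINT t:{-pi..x}|lborel. g t)) \<longlonglongrightarrow> 0"
    by (intro Lim_null_comparison[OF _ L1] always_eventually allI)
  then have "(\<lambda>j. P j (-pi) + (LINT t:{-pi..x}|lborel. Q j t)) \<longlonglongrightarrow> \<psi> (-pi) + (LINT t:{-pi..x}|lborel. g t)"
    by (intro tendsto_add conv) (simp add: LIM_zero_iff)
  moreover have "(\<lambda>j. P j (-pi) + (LINT t:{-pi..x}|lborel. Q j t)) = (\<lambda>j. P j x)"
    using H1_with_derivD(4)[OF H x] by simp
  ultimately show "\<psi> x = \<psi> (-pi) + (LINT t:{-pi..x}|lborel. g t)"
    using conv[of x] by (simp add: LIMSEQ_unique)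
qed

lemma H1_with_deriv_of_L2_limit:
  assumes H: "\<And>j. H1_with_deriv (P j) (Q j)"
    and bound: "\<And>j x. x \<in> {-pi..pi} \<Longrightarrow> cmod (P j x) \<le> M"
    and conv: "\<And>x. (\<lambda>j. P j x) \<longlonglongrightarrow> \<psi> x" and \<psi>: "continuous_on {-pi..pi} \<psi>"
    and V: "square_integrable circle_measure V"
    and L2: "(\<lambda>j. sq_integral circle_measure (\<lambda>x. (Q j x - \<i> * of_real a * P j x) - V x)) \<longlonglongrightarrow> 0"
  shows "H1_with_deriv \<psi> (\<lambda>x. V x + \<i> * of_real a * \<psi> x)"
proof (rule H1_with_deriv_of_L1_limit[OF H conv])
  have P: "continuous_on {-pi..pi} (P j)" for j by (rule H1_continuous_on[OF H])
  show "square_integrable circle_measure (\<lambda>x. V x + \<i> * of_real a * \<psi> x)"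
    by (intro square_integrable_add V square_integrable_continuous_on continuous_intros \<psi>)
  have U_V: "square_integrable circle_measure (\<lambda>x. (Q j x - \<i> * of_real a * P j x) - V x)" for j
    by (intro square_integrable_diff V H1_with_derivD(2)[OF H] square_integrable_continuous_on
        continuous_intros P)
  have int_P: "integrable circle_measure (\<lambda>x. \<i> * of_real a * (P j x - \<psi> x))" for j
    using P \<psi> by (intro continuous_on_integrable_circle continuous_intros)
  have le: "(\<integral>x. cmod (Q j x - (V x + \<i> * of_real a * \<psi> x)) \<partial>circle_measure)
      \<le> (\<integral>x. cmod ((Q j x - \<i> * of_real a * P j x) - V x) \<partial>circle_measure)
        + \<bar>a\<bar> * (\<integral>x. cmod (P j x - \<psi> x) \<partial>circle_measure)" for j
  proof -
    have "Q j x - (V x + \<i> * of_real a * \<psi> x)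
        = ((Q j x - \<i> * of_real a * P j x) - V x) + \<i> * of_real a * (P j x - \<psi> x)" for x
      by (simp add: algebra_simps)
    then have "(\<integral>x. cmod (Q j x - (V x + \<i> * of_real a * \<psi> x)) \<partial>circle_measure)
        = (\<integral>x. cmod (((Q j x - \<i> * of_real a * P j x) - V x) + \<i> * of_real a * (P j x - \<psi> x)) \<partial>circle_measure)"
      by (simp only:)
    then show ?thesis
      using integral_norm_add_le[OF circle.square_integrable_integrable[OF U_V] int_P, of j j]
      by (simp add: norm_mult)
  qed
  have norm_le: "norm (\<integral>x. cmod (Q j x - (V x + \<i> * of_real a * \<psi> x)) \<partial>circle_measure)
      \<le> (\<integral>x. cmod ((Q j x - \<i> * of_real a * P j x) - V x) \<partial>circle_measure)
        + \<bar>a\<bar> * (\<integral>x. cmod (P j x - \<psi> x) \<partial>circle_measure)" for j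
  proof -
    have "0 \<le> (\<integral>x. cmod (Q j x - (V x + \<i> * of_real a * \<psi> x)) \<partial>circle_measure)"
      by (rule integral_nonneg_AE) simp
    then show ?thesis using le[of j] by simp
  qed
  have "(\<lambda>j. (\<integral>x. cmod ((Q j x - \<i> * of_real a * P j x) - V x) \<partial>circle_measure)
        + \<bar>a\<bar> * (\<integral>x. cmod (P j x - \<psi> x) \<partial>circle_measure)) \<longlonglongrightarrow> 0"
    by (intro tendsto_add_zero tendsto_mult_right_zero circle.integral_norm_tendsto_zero[OF U_V L2]
        tendsto_integral_norm_diff_bounded[OF P \<psi> bound conv])
  then show "(\<lambda>j. \<integral>x. cmod (Q j x - (V x + \<i> * of_real a * \<psi> x)) \<partial>circle_measure) \<longlonglongrightarrow> 0"
    by (rule Lim_null_comparison[OF always_eventually[OF allI[OF norm_le]]])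
qed

section \<open>The energy functional\<close>

lemma circ_mean_pow_nonneg: "0 \<le> circ_mean_pow p f"
  unfolding circ_mean_pow_eq_circle by (simp add: integral_nonneg_AE)

lemma circ_mean_pow_le_one:
  assumes \<psi>: "continuous_on {-pi..pi} \<psi>" and c: "circ_mean_pow 2 \<psi> = 1" and p: "0 < p" "p < 2"
  shows "circ_mean_pow p \<psi> \<le> 1"
proof -
  have int_p: "integrable circle_measure (\<lambda>x. cmod (\<psi> x) powr p)"
    using \<psi> p by (intro continuous_on_integrable_circle continuous_on_powr' continuous_intros) auto
  have int_2: "integrable circle_measure (\<lambda>x. (cmod (\<psi> x))\<^sup>2)"
    using square_integrable_continuous_on[OF \<psi>] by (simp add: square_integrable_def)
  have "(\<integral>x. cmod (\<psi> x) powr p \<partial>circle_measure) \<le> (\<integral>x. p / 2 * (cmod (\<psi> x))\<^sup>2 + (1 - p / 2) \<partial>circle_measure)"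
    using int_p int_2 powr_le_quadratic p by (intro integral_mono) auto
  also have "\<dots> = p / 2 * sq_integral circle_measure \<psi> + (1 - p / 2) * (2 * pi)"
    using int_2 by (simp add: sq_integral_def measure_circle_measure)
  also have "\<dots> = 2 * pi"
    using c by (simp add: circ_mean_pow_two algebra_simps)
  finally show ?thesis by (simp add: circ_mean_pow_eq_circle)
qed

lemma Lp_norm_sq_bounds:
  assumes "continuous_on {-pi..pi} \<psi>" "circ_mean_pow 2 \<psi> = 1" "0 < p" "p < 2"
  shows "0 \<le> Lp_norm_sq p \<psi>" "Lp_norm_sq p \<psi> \<le> 1"
  using circ_mean_pow_le_one[OF assms] circ_mean_pow_nonneg assms(3)
  by (auto simp: Lp_norm_sq_def intro: powr_le1)

lemma circ_mean_pow_mult_of_real: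
  assumes "0 \<le> r"
  shows "circ_mean_pow q (\<lambda>x. of_real r * f x) = r powr q * circ_mean_pow q f"
  using assms by (simp add: circ_mean_pow_eq_circle norm_mult powr_mult)

lemma Lp_norm_sq_mult_of_real:
  assumes "0 \<le> r" "0 < p"
  shows "Lp_norm_sq p (\<lambda>x. of_real r * f x) = r\<^sup>2 * Lp_norm_sq p f"
  using assms circ_mean_pow_nonneg[of p f]
  by (simp add: Lp_norm_sq_def circ_mean_pow_mult_of_real powr_mult powr_powr powr_numeral)

lemma circ_mean_pow_tendsto:
  assumes F: "\<And>n. continuous_on {-pi..pi} (F n)" and G: "continuous_on {-pi..pi} G"
    and bound: "\<And>n x. x \<in> {-pi..pi} \<Longrightarrow> cmod (F n x) \<le> M"
    and lim: "\<And>x. x \<in> {-pi..pi} \<Longrightarrow> (\<lambda>n. F n x) \<longlonglongrightarrow> G x" and q: "0 < q"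
  shows "(\<lambda>n. circ_mean_pow q (F n)) \<longlonglongrightarrow> circ_mean_pow q G"
proof -
  have "(\<lambda>n. \<integral>x. cmod (F n x) powr q \<partial>circle_measure) \<longlonglongrightarrow> (\<integral>x. cmod (G x) powr q \<partial>circle_measure)"
  proof (rule circle.integral_tendsto_bounded)
    show "(\<lambda>x. cmod (F n x) powr q) \<in> borel_measurable circle_measure" for n
      using F q by (intro continuous_on_borel_measurable_circle continuous_on_powr' continuous_intros) auto
    show "(\<lambda>x. cmod (G x) powr q) \<in> borel_measurable circle_measure"
      using G q by (intro continuous_on_borel_measurable_circle continuous_on_powr' continuous_intros) auto
    show "norm (cmod (F n x) powr q) \<le> M powr q" if "x \<in> space circle_measure" for n x
      using bound[of x n] that q by (simp add: powr_mono2)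
    show "AE x in circle_measure. (\<lambda>n. cmod (F n x) powr q) \<longlonglongrightarrow> cmod (G x) powr q"
      using lim q by (intro AE_I2) (auto intro!: tendsto_powr' tendsto_norm)
  qed
  then show ?thesis
    unfolding circ_mean_pow_eq_circle by (intro tendsto_divide tendsto_const) auto
qed

lemma Lp_norm_sq_tendsto:
  assumes "\<And>n. continuous_on {-pi..pi} (F n)" "continuous_on {-pi..pi} G"
    and "\<And>n x. x \<in> {-pi..pi} \<Longrightarrow> cmod (F n x) \<le> M"
    and "\<And>x. x \<in> {-pi..pi} \<Longrightarrow> (\<lambda>n. F n x) \<longlonglongrightarrow> G x" and p: "0 < p"
  shows "(\<lambda>n. Lp_norm_sq p (F n)) \<longlonglongrightarrow> Lp_norm_sq p G"
  unfolding Lp_norm_sq_def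
  using circ_mean_pow_tendsto[OF assms] circ_mean_pow_nonneg p by (intro tendsto_powr') auto

definition kinetic :: "real \<Rightarrow> (real \<Rightarrow> complex) \<Rightarrow> (real \<Rightarrow> complex) \<Rightarrow> real" where
  "kinetic a \<psi> g = sq_integral circle_measure (\<lambda>x. g x - \<i> * of_real a * \<psi> x)"

lemma energy_eq_kinetic: "energy a p \<mu> \<psi> g = kinetic a \<psi> g / (2 * pi) + \<mu> * Lp_norm_sq p \<psi>"
  unfolding energy_def kinetic_def sq_integral_def set_integral_eq_circle ..

lemma admissible_const: "admissible (\<lambda>_. 1) (\<lambda>_. 0)"
  unfolding admissible_def H1_with_deriv_iff circ_mean_pow_two sq_integral_def
  by (simp add: square_integrable_def measure_circle_measure)

lemma kinetic_eq_energy: "kinetic a \<psi> g = 2 * pi * (energy a p \<mu> \<psi> g - \<mu> * Lp_norm_sq p \<psi>)"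
  by (simp add: energy_eq_kinetic)

lemma abs_mult_Lp_norm_sq_le:
  assumes "admissible \<psi> g" "0 < p" "p < 2"
  shows "\<bar>\<mu> * Lp_norm_sq p \<psi>\<bar> \<le> \<bar>\<mu>\<bar>"
  using assms Lp_norm_sq_bounds[OF H1_continuous_on, of \<psi> g]
  by (simp add: admissible_def abs_mult mult_left_le)

lemma energy_lower_bound:
  assumes "admissible \<psi> g" "0 < p" "p < 2"
  shows "- \<bar>\<mu>\<bar> \<le> energy a p \<mu> \<psi> g"
proof -
  have "0 \<le> kinetic a \<psi> g / (2 * pi)"
    by (simp add: kinetic_def sq_integral_nonneg)
  then show ?thesis
    using abs_mult_Lp_norm_sq_le[OF assms, of \<mu>] unfolding energy_eq_kinetic by linarith
qed

lemma bdd_below_energies: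
  assumes "0 < p" "p < 2"
  shows "bdd_below {energy a p \<mu> \<psi> g | \<psi> g. admissible \<psi> g}"
  using energy_lower_bound[OF _ assms] unfolding bdd_below_def by blast

lemma lambda_ap_le_energy:
  assumes "admissible \<psi> g" "0 < p" "p < 2"
  shows "lambda_ap a p \<mu> \<le> energy a p \<mu> \<psi> g"
  unfolding lambda_ap_def
  by (rule cInf_lower[OF _ bdd_below_energies[OF assms(2,3)]]) (use assms(1) in blast)

lemma lambda_ap_scaled_le:
  assumes H: "H1_with_deriv w W" and c: "0 < circ_mean_pow 2 w" and p: "0 < p" "p < 2"
  shows "lambda_ap a p \<mu> * circ_mean_pow 2 w \<le> kinetic a w W / (2 * pi) + \<mu> * Lp_norm_sq p w"
proof -
  define r where "r = 1 / sqrt (circ_mean_pow 2 w)"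
  have r: "0 < r" "r\<^sup>2 * circ_mean_pow 2 w = 1"
    using c by (simp_all add: r_def power_divide)
  have "admissible (\<lambda>x. of_real r * w x) (\<lambda>x. of_real r * W x)"
    unfolding admissible_def using H1_cmult[OF H] circ_mean_pow_mult_of_real[of r 2 w] r
    by (simp add: powr_numeral)
  then have "lambda_ap a p \<mu> \<le> energy a p \<mu> (\<lambda>x. of_real r * w x) (\<lambda>x. of_real r * W x)"
    by (rule lambda_ap_le_energy[OF _ p])
  also have "\<dots> = r\<^sup>2 * (kinetic a w W / (2 * pi) + \<mu> * Lp_norm_sq p w)"
  proof -
    have "kinetic a (\<lambda>x. of_real r * w x) (\<lambda>x. of_real r * W x) = r\<^sup>2 * kinetic a w W"
      using sq_integral_cmult[of circle_measure "of_real r" "\<lambda>x. W x - \<i> * of_real a * w x"]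
      by (simp add: kinetic_def algebra_simps)
    then show ?thesis
      using Lp_norm_sq_mult_of_real[of r p w] r p by (simp add: energy_eq_kinetic algebra_simps)
  qed
  finally have "lambda_ap a p \<mu> * circ_mean_pow 2 w
      \<le> r\<^sup>2 * (kinetic a w W / (2 * pi) + \<mu> * Lp_norm_sq p w) * circ_mean_pow 2 w"
    using c by (intro mult_right_mono) auto
  also have "\<dots> = (r\<^sup>2 * circ_mean_pow 2 w) * (kinetic a w W / (2 * pi) + \<mu> * Lp_norm_sq p w)"
    by (simp add: mult.commute mult.left_commute)
  finally show ?thesis
    using r(2) by simp
qed

section \<open>Minimizing sequences\<close>

lemma sq_integral_deriv_le_energy:
  assumes adm: "admissible \<psi> g" and p: "0 < p" "p < 2"
  shows "sq_integral circle_measure g \<le> 4 * pi * (energy a p \<mu> \<psi> g + \<bar>\<mu>\<bar> + a\<^sup>2)"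
proof -
  have H: "H1_with_deriv \<psi> g" and c: "circ_mean_pow 2 \<psi> = 1"
    using adm by (auto simp: admissible_def)
  have \<psi>: "continuous_on {-pi..pi} \<psi>" by (rule H1_continuous_on[OF H])
  have "sq_integral circle_measure g
      \<le> 2 * kinetic a \<psi> g + 2 * sq_integral circle_measure (\<lambda>x. \<i> * of_real a * \<psi> x)"
    unfolding kinetic_def
    by (intro sq_integral_le_diff_add H1_with_derivD(2)[OF H] square_integrable_continuous_on
        continuous_intros \<psi>)
  also have "sq_integral circle_measure (\<lambda>x. \<i> * of_real a * \<psi> x) = 2 * pi * a\<^sup>2"
    using c by (simp add: sq_integral_cmult norm_mult circ_mean_pow_two)
  also have "kinetic a \<psi> g \<le> 2 * pi * (energy a p \<mu> \<psi> g + \<bar>\<mu>\<bar>)"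
    using abs_mult_Lp_norm_sq_le[OF adm p, of \<mu>] by (simp add: kinetic_eq_energy[of _ _ _ p \<mu>])
  finally show ?thesis by (simp add: algebra_simps)
qed

lemma minimizing_sequence:
  fixes a p \<mu> :: real
  assumes p: "0 < p" "p < 2"
  obtains \<Psi> G :: "nat \<Rightarrow> real \<Rightarrow> complex" where "\<And>n. admissible (\<Psi> n) (G n)"
    "(\<lambda>n. energy a p \<mu> (\<Psi> n) (G n)) \<longlonglongrightarrow> lambda_ap a p \<mu>"
proof -
  let ?E = "{energy a p \<mu> \<psi> g | \<psi> g. admissible \<psi> g}"
  have "lambda_ap a p \<mu> \<in> closure ?E"
    unfolding lambda_ap_def
    by (rule closure_contains_Inf[OF _ bdd_below_energies[OF p]]) (use admissible_const in blast)
  then obtain e where e: "\<And>n. e n \<in> ?E" "e \<longlonglongrightarrow> lambda_ap a p \<mu>"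
    unfolding closure_sequential by blast
  have "\<exists>\<psi> g. admissible \<psi> g \<and> energy a p \<mu> \<psi> g = e n" for n
    using e(1)[of n] by (simp only: mem_Collect_eq) metis
  then obtain \<Psi> G where adm: "\<And>n. admissible (\<Psi> n) (G n)"
    and en: "\<And>n. energy a p \<mu> (\<Psi> n) (G n) = e n"
    by metis
  show ?thesis
    using that[of \<Psi> G] adm e(2) by (simp add: en)
qed

lemma admissible_pointwise_convergent_subseq:
  fixes \<Psi> G :: "nat \<Rightarrow> real \<Rightarrow> complex"
  assumes adm: "\<And>n. admissible (\<Psi> n) (G n)"
    and B: "\<And>n. sq_integral circle_measure (G n) \<le> B"
  obtains k \<psi> where "strict_mono k" "continuous_on {-pi..pi} \<psi>" "\<And>x. (\<lambda>j. \<Psi> (k j) x) \<longlonglongrightarrow> \<psi> x"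
    "\<And>n x. x \<in> {-pi..pi} \<Longrightarrow> cmod (\<Psi> n x) \<le> 1 + (B / 2 + pi)"
proof -
  have H: "H1_with_deriv (\<Psi> n) (G n)" and c: "circ_mean_pow 2 (\<Psi> n) = 1" for n
    using adm[of n] by (auto simp: admissible_def)
  have bound: "cmod (\<Psi> n x) \<le> 1 + (B / 2 + pi)" if "x \<in> {-pi..pi}" for n x
    by (rule H1_sup_bound[OF H c B that])
  have B0: "0 \<le> B" using B[of 0] sq_integral_nonneg order_trans by blast
  have equicont: "\<exists>d>0. \<forall>n y. y \<in> {-pi..pi} \<and> norm (x - y) < d \<longrightarrow> norm (\<Psi> n x - \<Psi> n y) < e"
    if "x \<in> {-pi..pi}" "0 < e" for x e
    using H1_uniform_modulus[OF H B that(1) _ that(2)] that(2) B0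
    by (intro exI[of _ "e\<^sup>2 / (B + 1)"]) auto
  obtain \<Phi> k where \<Phi>: "continuous_on {-pi..pi} \<Phi>" and k: "strict_mono (k :: nat \<Rightarrow> nat)"
    and unif: "\<And>e. 0 < e \<Longrightarrow> \<exists>N. \<forall>n x. n \<ge> N \<and> x \<in> {-pi..pi} \<longrightarrow> norm (\<Psi> (k n) x - \<Phi> x) < e"
    using Arzela_Ascoli[OF compact_Icc bound equicont] by blast
  have conv_circle: "(\<lambda>j. \<Psi> (k j) x) \<longlonglongrightarrow> \<Phi> x" if "x \<in> {-pi..pi}" for x
    using unif that by (intro LIMSEQ_I) (meson dist_norm)
  have periodic: "\<Psi> n (x + of_int m * (2 * pi)) = \<Psi> n x" for n x m
    by (rule periodic_shift_int) (rule H1_with_derivD(1)[OF H])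
  have conv: "(\<lambda>j. \<Psi> (k j) x) \<longlonglongrightarrow> \<Phi> (x + of_int m * (2 * pi))"
    if "x + of_int m * (2 * pi) \<in> {-pi..pi}" for x m
    using conv_circle[OF that] by (simp add: periodic)
  define \<psi> where "\<psi> x = lim (\<lambda>j. \<Psi> (k j) x)" for x
  have lim: "(\<lambda>j. \<Psi> (k j) x) \<longlonglongrightarrow> \<psi> x" for x
    using conv shift_int_into_circle[of x] unfolding \<psi>_def by (metis convergent_def convergent_LIMSEQ_iff)
  have "continuous_on {-pi..pi} \<psi>"
    using \<Phi> conv_circle lim by (metis LIMSEQ_unique continuous_on_cong)
  then show ?thesis
    using that k lim bound by blast
qed

lemma sq_integral_diff_le_midpoint:
  assumes H1: "H1_with_deriv P1 Q1" and H2: "H1_with_deriv P2 Q2"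
    and c: "0 < circ_mean_pow 2 (\<lambda>x. (P1 x + P2 x) / 2)" and p: "0 < p" "p < 2"
  shows "sq_integral circle_measure (\<lambda>x. (Q1 x - \<i> * of_real a * P1 x) - (Q2 x - \<i> * of_real a * P2 x))
    \<le> 2 * kinetic a P1 Q1 + 2 * kinetic a P2 Q2
      - 8 * pi * (lambda_ap a p \<mu> * circ_mean_pow 2 (\<lambda>x. (P1 x + P2 x) / 2)
                  - \<mu> * Lp_norm_sq p (\<lambda>x. (P1 x + P2 x) / 2))"
proof -
  define w where "w = (\<lambda>x. (P1 x + P2 x) / 2)"
  define W where "W = (\<lambda>x. (Q1 x + Q2 x) / 2)"
  define U where "U P Q x = Q x - \<i> * of_real a * P x" for P Q :: "real \<Rightarrow> complex" and x
  have "H1_with_deriv (\<lambda>x. 1 / 2 * (P1 x + P2 x)) (\<lambda>x. 1 / 2 * (Q1 x + Q2 x))"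
    by (rule H1_cmult[OF H1_add[OF H1 H2]])
  then have Hw: "H1_with_deriv w W"
    by (simp add: w_def W_def)
  have U: "square_integrable circle_measure (U P Q)" if "H1_with_deriv P Q" for P Q
    unfolding U_def
    by (intro square_integrable_diff H1_with_derivD(2)[OF that] square_integrable_continuous_on
        continuous_intros H1_continuous_on[OF that])
  have kinetic_U: "kinetic a P Q = sq_integral circle_measure (U P Q)" for P Q
    by (simp add: kinetic_def U_def[abs_def])
  have "U w W = (\<lambda>x. (U P1 Q1 x + U P2 Q2 x) / 2)"
    by (auto simp: U_def w_def W_def field_simps)
  then have kinetic_w: "kinetic a w W = sq_integral circle_measure (\<lambda>x. (U P1 Q1 x + U P2 Q2 x) / 2)"
    by (simp add: kinetic_U)
  have "lambda_ap a p \<mu> * circ_mean_pow 2 w - \<mu> * Lp_norm_sq p w \<le> kinetic a w W / (2 * pi)"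
    using lambda_ap_scaled_le[OF Hw _ p, of a \<mu>] c by (simp add: w_def)
  then have "8 * pi * (lambda_ap a p \<mu> * circ_mean_pow 2 w - \<mu> * Lp_norm_sq p w) \<le> 4 * kinetic a w W"
    by (simp add: field_simps)
  then have "sq_integral circle_measure (\<lambda>x. U P1 Q1 x - U P2 Q2 x)
      \<le> 2 * kinetic a P1 Q1 + 2 * kinetic a P2 Q2
        - 8 * pi * (lambda_ap a p \<mu> * circ_mean_pow 2 w - \<mu> * Lp_norm_sq p w)"
    using sq_integral_parallelogram[OF U[OF H1] U[OF H2]] kinetic_w by (simp add: kinetic_U)
  then show ?thesis
    by (simp add: U_def w_def)
qed

lemma midpoints_tendsto:
  assumes P: "\<And>j. continuous_on {-pi..pi} (P j)" and \<psi>: "continuous_on {-pi..pi} \<psi>"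
    and bound: "\<And>j x. x \<in> {-pi..pi} \<Longrightarrow> cmod (P j x) \<le> M"
    and conv: "\<And>x. (\<lambda>j. P j x) \<longlonglongrightarrow> \<psi> x"
    and I: "filterlim I sequentially sequentially" and J: "filterlim J sequentially sequentially"
    and p: "0 < p"
  shows "(\<lambda>N. circ_mean_pow 2 (\<lambda>x. (P (I N) x + P (J N) x) / 2)) \<longlonglongrightarrow> circ_mean_pow 2 \<psi>"
    "(\<lambda>N. Lp_norm_sq p (\<lambda>x. (P (I N) x + P (J N) x) / 2)) \<longlonglongrightarrow> Lp_norm_sq p \<psi>"
proof -
  have w: "continuous_on {-pi..pi} (\<lambda>x. (P (I N) x + P (J N) x) / 2)" for N
    using P by (intro continuous_intros) auto
  have w_bound: "cmod ((P (I N) x + P (J N) x) / 2) \<le> M" if "x \<in> {-pi..pi}" for N x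
    using norm_triangle_ineq[of "P (I N) x" "P (J N) x"] bound[OF that, of "I N"] bound[OF that, of "J N"]
    by (simp add: norm_divide)
  have "(\<lambda>N. (P (I N) x + P (J N) x) / 2) \<longlonglongrightarrow> (\<psi> x + \<psi> x) / 2" for x
    using filterlim_compose[OF conv[of x] I] filterlim_compose[OF conv[of x] J]
    by (intro tendsto_intros) (simp_all add: o_def)
  then have w_lim: "(\<lambda>N. (P (I N) x + P (J N) x) / 2) \<longlonglongrightarrow> \<psi> x" for x
    by simp
  show "(\<lambda>N. circ_mean_pow 2 (\<lambda>x. (P (I N) x + P (J N) x) / 2)) \<longlonglongrightarrow> circ_mean_pow 2 \<psi>"
    using circ_mean_pow_tendsto[OF w \<psi> w_bound w_lim, of 2] by simp
  show "(\<lambda>N. Lp_norm_sq p (\<lambda>x. (P (I N) x + P (J N) x) / 2)) \<longlonglongrightarrow> Lp_norm_sq p \<psi>"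
    by (rule Lp_norm_sq_tendsto[OF w \<psi> w_bound w_lim p])
qed

lemma covariant_derivatives_Cauchy:
  assumes H: "\<And>j. H1_with_deriv (P j) (Q j)"
    and bound: "\<And>j x. x \<in> {-pi..pi} \<Longrightarrow> cmod (P j x) \<le> M"
    and conv: "\<And>x. (\<lambda>j. P j x) \<longlonglongrightarrow> \<psi> x" and \<psi>: "continuous_on {-pi..pi} \<psi>"
    and c: "circ_mean_pow 2 \<psi> = 1"
    and kinetic: "(\<lambda>j. kinetic a (P j) (Q j)) \<longlonglongrightarrow> 2 * pi * (lambda_ap a p \<mu> - \<mu> * Lp_norm_sq p \<psi>)"
    and p: "0 < p" "p < 2" and e: "0 < e"
  shows "\<exists>N. \<forall>i\<ge>N. \<forall>j\<ge>N.
    sq_integral circle_measure (\<lambda>x. (Q i x - \<i> * of_real a * P i x) - (Q j x - \<i> * of_real a * P j x)) < e"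
proof (rule eventually_pairs_by_sequences)
  fix I J :: "nat \<Rightarrow> nat"
  assume I: "filterlim I sequentially sequentially" and J: "filterlim J sequentially sequentially"
  define w where "w N x = (P (I N) x + P (J N) x) / 2" for N x
  have c_w: "(\<lambda>N. circ_mean_pow 2 (w N)) \<longlonglongrightarrow> 1"
    and Lp_w: "(\<lambda>N. Lp_norm_sq p (w N)) \<longlonglongrightarrow> Lp_norm_sq p \<psi>"
    using midpoints_tendsto[OF H1_continuous_on[OF H] \<psi> bound conv I J p(1)] c
    by (simp_all add: w_def[abs_def])
  define R where "R N = 2 * kinetic a (P (I N)) (Q (I N)) + 2 * kinetic a (P (J N)) (Q (J N))
      - 8 * pi * (lambda_ap a p \<mu> * circ_mean_pow 2 (w N) - \<mu> * Lp_norm_sq p (w N))" for N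
  have "R \<longlonglongrightarrow> 0"
  proof -
    have "R \<longlonglongrightarrow> 2 * (2 * pi * (lambda_ap a p \<mu> - \<mu> * Lp_norm_sq p \<psi>))
        + 2 * (2 * pi * (lambda_ap a p \<mu> - \<mu> * Lp_norm_sq p \<psi>))
        - 8 * pi * (lambda_ap a p \<mu> * 1 - \<mu> * Lp_norm_sq p \<psi>)"
      unfolding R_def using filterlim_compose[OF kinetic I] filterlim_compose[OF kinetic J]
      by (intro tendsto_intros c_w Lp_w) (simp_all add: o_def)
    then show ?thesis by (simp add: algebra_simps)
  qed
  then have "eventually (\<lambda>N. R N < e \<and> 0 < circ_mean_pow 2 (w N)) sequentially"
    using order_tendstoD(2)[OF _ e] order_tendstoD(1)[OF c_w, of 0] by (intro eventually_conj) simp_all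
  then show "eventually (\<lambda>N. sq_integral circle_measure
      (\<lambda>x. (Q (I N) x - \<i> * of_real a * P (I N) x) - (Q (J N) x - \<i> * of_real a * P (J N) x)) < e) sequentially"
  proof eventually_elim
    case (elim N)
    then show ?case
      using sq_integral_diff_le_midpoint[OF H H _ p, of "I N" "J N" a \<mu>]
      by (simp add: R_def w_def[abs_def])
  qed
qed

lemma H1_limit_kinetic_le:
  assumes H: "\<And>j. H1_with_deriv (P j) (Q j)"
    and bound: "\<And>j x. x \<in> {-pi..pi} \<Longrightarrow> cmod (P j x) \<le> M"
    and conv: "\<And>x. (\<lambda>j. P j x) \<longlonglongrightarrow> \<psi> x" and \<psi>: "continuous_on {-pi..pi} \<psi>"
    and Cauchy: "\<And>e. 0 < e \<Longrightarrow> \<exists>N. \<forall>i\<ge>N. \<forall>j\<ge>N. sq_integral circle_measure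
      (\<lambda>x. (Q i x - \<i> * of_real a * P i x) - (Q j x - \<i> * of_real a * P j x)) < e"
    and kinetic: "(\<lambda>j. kinetic a (P j) (Q j)) \<longlonglongrightarrow> L"
  shows "\<exists>g. H1_with_deriv \<psi> g \<and> kinetic a \<psi> g \<le> L"
proof -
  define U where "U j x = Q j x - \<i> * of_real a * P j x" for j x
  have U: "square_integrable circle_measure (U j)" for j
    unfolding U_def
    by (intro square_integrable_diff H1_with_derivD(2)[OF H] square_integrable_continuous_on
        continuous_intros H1_continuous_on[OF H])
  obtain r V where r: "strict_mono r" and V: "square_integrable circle_measure V"
    and U_AE: "AE x in circle_measure. (\<lambda>i. U (r i) x) \<longlonglongrightarrow> V x"
    and U_L2: "(\<lambda>i. sq_integral circle_measure (\<lambda>x. U (r i) x - V x)) \<longlonglongrightarrow> 0"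
    using circle.square_integrable_Cauchy_subseq[where U = U, OF U Cauchy[unfolded U_def[symmetric]]]
    by blast
  have conv_r: "(\<lambda>i. P (r i) x) \<longlonglongrightarrow> \<psi> x" for x
    using LIMSEQ_subseq_LIMSEQ[OF conv r] by (simp add: o_def)
  have "H1_with_deriv \<psi> (\<lambda>x. V x + \<i> * of_real a * \<psi> x)"
    using H1_with_deriv_of_L2_limit[where P = "\<lambda>i. P (r i)" and Q = "\<lambda>i. Q (r i)", OF H bound conv_r \<psi> V]
      U_L2 by (simp add: U_def)
  moreover have "sq_integral circle_measure V \<le> L"
  proof (rule sq_integral_AE_limit_le[OF U _ U_AE])
    show "V \<in> borel_measurable circle_measure" using V by (simp add: square_integrable_def)
    show "(\<lambda>i. sq_integral circle_measure (U (r i))) \<longlonglongrightarrow> L"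
      using LIMSEQ_subseq_LIMSEQ[OF kinetic r] by (simp add: kinetic_def U_def[abs_def] o_def)
  qed
  ultimately show ?thesis
    by (intro exI[of _ "\<lambda>x. V x + \<i> * of_real a * \<psi> x"]) (simp add: kinetic_def)
qed

lemma minimizer_of_convergent_minimizing_sequence:
  assumes adm: "\<And>j. admissible (P j) (Q j)"
    and bound: "\<And>j x. x \<in> {-pi..pi} \<Longrightarrow> cmod (P j x) \<le> M"
    and conv: "\<And>x. (\<lambda>j. P j x) \<longlonglongrightarrow> \<psi> x" and \<psi>: "continuous_on {-pi..pi} \<psi>"
    and energy: "(\<lambda>j. energy a p \<mu> (P j) (Q j)) \<longlonglongrightarrow> lambda_ap a p \<mu>"
    and p: "0 < p" "p < 2"
  shows "\<exists>g. admissible \<psi> g \<and> energy a p \<mu> \<psi> g \<le> lambda_ap a p \<mu>"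
proof -
  have H: "H1_with_deriv (P j) (Q j)" and c: "circ_mean_pow 2 (P j) = 1" for j
    using adm[of j] by (auto simp: admissible_def)
  have P: "continuous_on {-pi..pi} (P j)" for j by (rule H1_continuous_on[OF H])
  have c\<psi>: "circ_mean_pow 2 \<psi> = 1"
    using circ_mean_pow_tendsto[OF P \<psi> bound conv, of 2] c by (simp add: LIMSEQ_const_iff)
  define L where "L = 2 * pi * (lambda_ap a p \<mu> - \<mu> * Lp_norm_sq p \<psi>)"
  have kinetic: "(\<lambda>j. kinetic a (P j) (Q j)) \<longlonglongrightarrow> L"
    unfolding L_def kinetic_eq_energy[of a _ _ p \<mu>]
    by (intro tendsto_intros energy Lp_norm_sq_tendsto[OF P \<psi> bound conv p(1)])
  obtain g where "H1_with_deriv \<psi> g" "kinetic a \<psi> g \<le> L"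
    using H1_limit_kinetic_le[where P = P and Q = Q, OF H bound conv \<psi> _ kinetic]
      covariant_derivatives_Cauchy[where P = P and Q = Q, OF H bound conv \<psi> c\<psi> kinetic[unfolded L_def] p]
    by blast
  moreover have "kinetic a \<psi> g / (2 * pi) \<le> L / (2 * pi)"
    using \<open>kinetic a \<psi> g \<le> L\<close> by (simp add: divide_right_mono)
  ultimately show ?thesis
    using c\<psi> by (intro exI[of _ g]) (simp add: admissible_def energy_eq_kinetic L_def)
qed

theorem lambda_ap_attained:
  fixes a p \<mu> :: real
  assumes p: "0 < p" "p < 2"
  shows "\<exists>\<psi> g. admissible \<psi> g \<and> energy a p \<mu> \<psi> g = lambda_ap a p \<mu>"
proof -
  obtain \<Psi> G where adm: "\<And>n. admissible (\<Psi> n) (G n)"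
    and energy: "(\<lambda>n. energy a p \<mu> (\<Psi> n) (G n)) \<longlonglongrightarrow> lambda_ap a p \<mu>"
    using minimizing_sequence[OF p] by blast
  obtain E where E: "\<And>n. norm (energy a p \<mu> (\<Psi> n) (G n)) \<le> E"
    using BseqE[OF convergent_imp_Bseq[OF convergentI[OF energy]]] by auto
  have G_bound: "sq_integral circle_measure (G n) \<le> 4 * pi * (E + \<bar>\<mu>\<bar> + a\<^sup>2)" for n
  proof -
    have "energy a p \<mu> (\<Psi> n) (G n) \<le> E" using E[of n] by simp
    then have "4 * pi * (energy a p \<mu> (\<Psi> n) (G n) + \<bar>\<mu>\<bar> + a\<^sup>2) \<le> 4 * pi * (E + \<bar>\<mu>\<bar> + a\<^sup>2)"
      by (intro mult_left_mono) auto
    then show ?thesis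
      using sq_integral_deriv_le_energy[OF adm p, of n a \<mu>] by linarith
  qed
  obtain k \<psi> where k: "strict_mono k" and \<psi>: "continuous_on {-pi..pi} \<psi>"
    and conv: "\<And>x. (\<lambda>j. \<Psi> (k j) x) \<longlonglongrightarrow> \<psi> x"
    and bound: "\<And>n x. x \<in> {-pi..pi} \<Longrightarrow> cmod (\<Psi> n x) \<le> 1 + (4 * pi * (E + \<bar>\<mu>\<bar> + a\<^sup>2) / 2 + pi)"
    using admissible_pointwise_convergent_subseq[where \<Psi> = \<Psi> and G = G, OF adm G_bound] by blast
  have "(\<lambda>j. energy a p \<mu> (\<Psi> (k j)) (G (k j))) \<longlonglongrightarrow> lambda_ap a p \<mu>"
    using LIMSEQ_subseq_LIMSEQ[OF energy k] by (simp add: o_def)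
  then obtain g where "admissible \<psi> g" "energy a p \<mu> \<psi> g \<le> lambda_ap a p \<mu>"
    using minimizer_of_convergent_minimizing_sequence[where P = "\<lambda>j. \<Psi> (k j)" and Q = "\<lambda>j. G (k j)",
        OF adm bound conv \<psi> _ p] by blast
  then show ?thesis
    using lambda_ap_le_energy[OF _ p] by (meson antisym)
qed

theorem lemma3p2:
  fixes a p \<mu> :: real
  assumes "0 \<le> a" "a \<le> 1/2" "1 \<le> p" "p < 2" "\<mu> \<ge> - (a\<^sup>2)"
  shows "\<exists>\<psi> g. admissible \<psi> g \<and> energy a p \<mu> \<psi> g = lambda_ap a p \<mu>"
  using lambda_ap_attained assms by simp

end
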